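(* Let $p$ be a prime, let $e\geq2$ and $d\geq2$ be integers and let $\lambda\in\{1,\dots,\min(e,d-1)\}$. The map $$(\alpha_1,\dots,\alpha_d)\longmapsto (p^{\mu-\alpha_1},\dots,p^{\mu-\alpha_d}),\qquad \mu=\Big\lfloor \big(e+\textstyle\sum_{i=1}^d\alpha_i\big)/d\Big\rfloor=\big(e-\lambda+\textstyle\sum_{i=1}^d\alpha_i\big)/d,$$ is a bijection from $\mathcal R_\lambda(d,e)$ onto the set of $d$-dimensional vector-factorisations of $p^{e-\lambda}$. Its inverse is $(p^{\beta_1},\dots,p^{\beta_d})\longmapsto(B-\beta_1,\dots,B-\beta_d)$ where $B=\max(\beta_1,\dots,\beta_d)$.
   Context: $\mathbb N=\{0,1,2,\dots\}$. A $d$-dimensional vector-factorisation of $N\geq1$ is a vector $(v_1,\dots,v_d)\in\mathbb N^d$ with $v_1\cdots v_d=N$. $\mathcal R_\lambda(d,e)$ is the set of all $\alpha=(\alpha_1,\dots,\alpha_d)\in\mathbb N^d$ with $\min(\alpha_1,\dots,\alpha_d)=0$, $\max(\alpha_1,\dots,\alpha_d)\,d<e+\sum_i\alpha_i$ and $e+\sum_i\alpha_i\equiv\lambda\pmod d$. *)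

theory Defs
  imports "HOL-Computational_Algebra.Primes"
begin

definition vec_fact :: "nat \<Rightarrow> nat \<Rightarrow> nat list set" where
  "vec_fact d N = {v. length v = d \<and> prod_list v = N}"

definition R_set :: "nat \<Rightarrow> nat \<Rightarrow> nat \<Rightarrow> nat list set" where
  "R_set lam d e = {\<alpha>. length \<alpha> = d \<and> Min (set \<alpha>) = 0
      \<and> Max (set \<alpha>) * d < e + sum_list \<alpha>
      \<and> (e + sum_list \<alpha>) mod d = lam mod d}"

definition R_to_fact :: "nat \<Rightarrow> nat \<Rightarrow> nat \<Rightarrow> nat list \<Rightarrow> nat list" where
  "R_to_fact p d e \<alpha> = (let \<mu> = (e + sum_list \<alpha>) div d in map (\<lambda>a. p ^ (\<mu> - a)) \<alpha>)"

end

theory Submission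
  imports Defs
begin

text \<open>Writing a factorisation of \<open>p ^ (e - \<lambda>)\<close> as \<open>(p ^ \<beta>\<^sub>1, \<dots>, p ^ \<beta>\<^sub>d)\<close>, it is determined
  by an exponent vector \<open>\<beta>\<close> with \<open>\<Sum>\<beta>\<^sub>i = e - \<lambda>\<close>. Reflecting \<open>\<beta>\<close> at its maximum \<open>B\<close> gives
  \<open>\<alpha>\<^sub>i = B - \<beta>\<^sub>i\<close>, with minimum \<open>0\<close> and \<open>e + \<Sum>\<alpha>\<^sub>i = B d + \<lambda>\<close>; since \<open>0 < \<lambda> < d\<close> this
  says exactly that \<open>\<alpha> \<in> \<R>\<^sub>\<lambda>(d, e)\<close> with \<open>\<mu> = B\<close>. Conversely, for \<open>\<alpha> \<in> \<R>\<^sub>\<lambda>(d, e)\<close> the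
  condition \<open>d max \<alpha> < e + \<Sum>\<alpha>\<^sub>i = \<mu> d + \<lambda>\<close> forces \<open>max \<alpha> \<le> \<mu>\<close>, so \<open>\<beta>\<^sub>i = \<mu> - \<alpha>\<^sub>i\<close> is a
  genuine subtraction, and \<open>min \<alpha> = 0\<close> gives \<open>max \<beta> = \<mu>\<close>; hence the two reflections are
  mutually inverse.\<close>

lemma prod_list_map_power:
  "prod_list (map (\<lambda>b. x ^ b) bs) = (x :: 'a :: comm_monoid_mult) ^ sum_list bs"
  by (induct bs) (simp_all add: power_add)

lemma sum_list_map_diff_const:
  assumes "\<forall>b\<in>set bs. b \<le> (m :: nat)"
  shows "sum_list (map (\<lambda>b. m - b) bs) + sum_list bs = length bs * m"
  using assms by (induct bs) auto

lemma map_diff_const_involution: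
  assumes "\<forall>b\<in>set bs. b \<le> (m :: nat)"
  shows "map (\<lambda>b. m - b) (map (\<lambda>b. m - b) bs) = bs"
  using assms by (induct bs) auto

lemma Max_map_diff_const:
  assumes "0 \<in> set bs" and "\<forall>b\<in>set bs. b \<le> (m :: nat)"
  shows "Max (set (map (\<lambda>b. m - b) bs)) = m"
  using assms by (intro Max_eqI) force+

lemma map_power_in_vec_fact_iff:
  assumes "(p :: nat) > 1"
  shows "map (\<lambda>b. p ^ b) \<beta> \<in> vec_fact d (p ^ n) \<longleftrightarrow> length \<beta> = d \<and> sum_list \<beta> = n"
  unfolding vec_fact_def mem_Collect_eq prod_list_map_power power_inject_exp[OF assms] by simp

lemma vec_fact_prime_power_eq_map_power:
  assumes "prime p" and "v \<in> vec_fact d (p ^ n)"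
  shows "v = map (\<lambda>b. p ^ b) (map (multiplicity p) v)"
proof -
  have "x = p ^ multiplicity p x" if "x \<in> set v" for x
  proof -
    have "x dvd p ^ n"
      using assms(2) that prod_list_dvd unfolding vec_fact_def by fastforce
    then obtain i where "x = p ^ i"
      using divides_primepow_nat[OF assms(1)] by blast
    then show ?thesis
      using assms(1) by simp
  qed
  then show ?thesis
    by (simp add: map_idI)
qed

definition R_to_exps :: "nat \<Rightarrow> nat \<Rightarrow> nat list \<Rightarrow> nat list" where
  "R_to_exps d e \<alpha> = map (\<lambda>a. (e + sum_list \<alpha>) div d - a) \<alpha>"

definition fact_to_R :: "nat \<Rightarrow> nat list \<Rightarrow> nat list" where
  "fact_to_R p v = (let \<beta> = map (multiplicity p) v in map (\<lambda>b. Max (set \<beta>) - b) \<beta>)"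

lemma R_to_fact_eq: "R_to_fact p d e \<alpha> = map (\<lambda>b. p ^ b) (R_to_exps d e \<alpha>)"
  unfolding R_to_fact_def R_to_exps_def Let_def by simp

lemma fact_to_R_map_power:
  assumes "prime p"
  shows "fact_to_R p (map (\<lambda>b. p ^ b) \<beta>) = map (\<lambda>b. Max (set \<beta>) - b) \<beta>"
  using assms unfolding fact_to_R_def Let_def by (simp add: comp_def)

context
  fixes lam d e :: nat
  assumes lam_less: "lam < d" and lam_le: "lam \<le> e"
begin

lemma R_set_div_mult_eq:
  assumes "\<alpha> \<in> R_set lam d e"
  shows "(e + sum_list \<alpha>) div d * d = e - lam + sum_list \<alpha>"
proof -
  have "(e + sum_list \<alpha>) mod d = lam"
    using assms lam_less unfolding R_set_def by simp
  then show ?thesis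
    using div_mult_mod_eq[of "e + sum_list \<alpha>" d] lam_le by linarith
qed

lemma R_set_le_div:
  assumes "\<alpha> \<in> R_set lam d e" and "a \<in> set \<alpha>"
  shows "a \<le> (e + sum_list \<alpha>) div d"
proof -
  let ?\<mu> = "(e + sum_list \<alpha>) div d"
  have "a * d \<le> Max (set \<alpha>) * d"
    using assms(2) by simp
  also have "\<dots> < e + sum_list \<alpha>"
    using assms(1) unfolding R_set_def by simp
  also have "\<dots> = ?\<mu> * d + lam"
    using R_set_div_mult_eq[OF assms(1)] lam_le by simp
  also have "\<dots> < (?\<mu> + 1) * d"
    using lam_less by simp
  finally show ?thesis
    by (simp only: mult_less_cancel2) simp
qed

lemma sum_list_R_to_exps:
  assumes "\<alpha> \<in> R_set lam d e"
  shows "sum_list (R_to_exps d e \<alpha>) = e - lam"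
proof -
  have "sum_list (R_to_exps d e \<alpha>) + sum_list \<alpha> = d * ((e + sum_list \<alpha>) div d)"
    using sum_list_map_diff_const[of \<alpha>] R_set_le_div[OF assms] assms
    unfolding R_to_exps_def R_set_def by simp
  then show ?thesis
    using R_set_div_mult_eq[OF assms] by (simp add: mult.commute)
qed

lemma reflect_R_to_exps:
  assumes "\<alpha> \<in> R_set lam d e"
  shows "map (\<lambda>b. Max (set (R_to_exps d e \<alpha>)) - b) (R_to_exps d e \<alpha>) = \<alpha>"
proof -
  have "set \<alpha> \<noteq> {}"
    using assms lam_less unfolding R_set_def by auto
  then have "0 \<in> set \<alpha>"
    using assms Min_in[of "set \<alpha>"] unfolding R_set_def by auto
  moreover have "\<forall>a\<in>set \<alpha>. a \<le> (e + sum_list \<alpha>) div d"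
    using R_set_le_div[OF assms] by blast
  ultimately show ?thesis
    unfolding R_to_exps_def by (simp only: Max_map_diff_const map_diff_const_involution)
qed

lemma R_to_fact_in_vec_fact:
  assumes "\<alpha> \<in> R_set lam d e"
  shows "R_to_fact p d e \<alpha> \<in> vec_fact d (p ^ (e - lam))"
  using assms sum_list_R_to_exps[OF assms]
  by (simp add: R_to_fact_eq vec_fact_def prod_list_map_power R_to_exps_def R_set_def del: map_map)

context
  fixes \<beta> :: "nat list"
  assumes length_\<beta>: "length \<beta> = d" and sum_\<beta>: "sum_list \<beta> = e - lam"
begin

lemma sum_list_reflect_Max:
  "e + sum_list (map (\<lambda>b. Max (set \<beta>) - b) \<beta>) = Max (set \<beta>) * d + lam"
proof -
  have "sum_list (map (\<lambda>b. Max (set \<beta>) - b) \<beta>) + (e - lam) = d * Max (set \<beta>)"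
    using sum_list_map_diff_const[of \<beta> "Max (set \<beta>)"] length_\<beta> sum_\<beta> by simp
  then show ?thesis
    using lam_le by (simp add: mult.commute)
qed

lemma reflect_Max_in_R_set:
  assumes "0 < lam"
  shows "map (\<lambda>b. Max (set \<beta>) - b) \<beta> \<in> R_set lam d e"
proof -
  let ?\<alpha> = "map (\<lambda>b. Max (set \<beta>) - b) \<beta>"
  have "set \<beta> \<noteq> {}"
    using length_\<beta> lam_less by auto
  then have "0 \<in> set ?\<alpha>"
    by (auto intro!: image_eqI[where x = "Max (set \<beta>)"])
  have "Max (set ?\<alpha>) \<le> Max (set \<beta>)"
    using \<open>set \<beta> \<noteq> {}\<close> by simp
  then have "Max (set ?\<alpha>) * d \<le> Max (set \<beta>) * d"
    by (rule mult_le_mono1)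
  then have "Max (set ?\<alpha>) * d < e + sum_list ?\<alpha>"
    using assms sum_list_reflect_Max by linarith
  moreover have "Min (set ?\<alpha>) = 0"
    using \<open>0 \<in> set ?\<alpha>\<close> by (intro Min_eqI) auto
  ultimately show ?thesis
    unfolding R_set_def using sum_list_reflect_Max length_\<beta> by simp
qed

lemma R_to_exps_reflect_Max:
  "R_to_exps d e (map (\<lambda>b. Max (set \<beta>) - b) \<beta>) = \<beta>"
  using sum_list_reflect_Max lam_less
  by (simp add: R_to_exps_def map_diff_const_involution del: map_map)

end

end

theorem proposition3p2:
  fixes p e d lam :: nat
  assumes "prime p" and "e \<ge> 2" and "d \<ge> 2" and "1 \<le> lam" and "lam \<le> min e (d - 1)"
  shows "(\<forall>\<alpha>\<in>R_set lam d e. (e + sum_list \<alpha>) div d * d = e - lam + sum_list \<alpha>)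
    \<and> bij_betw (R_to_fact p d e) (R_set lam d e) (vec_fact d (p ^ (e - lam)))
    \<and> (\<forall>\<beta>. length \<beta> = d \<and> map (\<lambda>b. p ^ b) \<beta> \<in> vec_fact d (p ^ (e - lam)) \<longrightarrow>
          map (\<lambda>b. Max (set \<beta>) - b) \<beta> \<in> R_set lam d e
        \<and> R_to_fact p d e (map (\<lambda>b. Max (set \<beta>) - b) \<beta>) = map (\<lambda>b. p ^ b) \<beta>)"
proof -
  have lam: "0 < lam" "lam < d" "lam \<le> e"
    using assms(3-5) by auto
  have inverse: "map (\<lambda>b. Max (set \<beta>) - b) \<beta> \<in> R_set lam d e
      \<and> R_to_fact p d e (map (\<lambda>b. Max (set \<beta>) - b) \<beta>) = map (\<lambda>b. p ^ b) \<beta>"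
    if "map (\<lambda>b. p ^ b) \<beta> \<in> vec_fact d (p ^ (e - lam))" for \<beta>
  proof -
    have "length \<beta> = d" and "sum_list \<beta> = e - lam"
      using that map_power_in_vec_fact_iff prime_gt_1_nat[OF assms(1)] by blast+
    then show ?thesis
      using reflect_Max_in_R_set[OF lam(2,3) _ _ lam(1)] R_to_exps_reflect_Max[OF lam(2,3)]
      by (simp add: R_to_fact_eq)
  qed
  have inverse_fact: "fact_to_R p v \<in> R_set lam d e \<and> R_to_fact p d e (fact_to_R p v) = v"
    if v: "v \<in> vec_fact d (p ^ (e - lam))" for v
    using inverse[of "map (multiplicity p) v"] v vec_fact_prime_power_eq_map_power[OF assms(1) v]
    by (metis fact_to_R_map_power[OF assms(1)])
  have "bij_betw (R_to_fact p d e) (R_set lam d e) (vec_fact d (p ^ (e - lam)))"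
  proof (rule bij_betw_byWitness[where f' = "fact_to_R p"])
    show "\<forall>\<alpha>\<in>R_set lam d e. fact_to_R p (R_to_fact p d e \<alpha>) = \<alpha>"
      using reflect_R_to_exps[OF lam(2,3)] fact_to_R_map_power[OF assms(1)]
      by (simp add: R_to_fact_eq)
    show "R_to_fact p d e ` R_set lam d e \<subseteq> vec_fact d (p ^ (e - lam))"
      using R_to_fact_in_vec_fact[OF lam(2,3)] by blast
  qed (use inverse_fact in auto)
  then show ?thesis
    using R_set_div_mult_eq[OF lam(2,3)] inverse by blast
qed

end
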